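(* Consider the decentralized Thompson Sampling algorithm for Bernoulli rewards described in the context, with any learning rate $\eta>0$. Let $k\in\{2,\dots,K\}$ and fix thresholds $\mu_k<x_k<y_k<\mu_1$. Then for every $T\ge1$, \[ \sum_{i=1}^N\mathbb E\left[\sum_{t=1}^T\mathbf 1\{A^{(i)}_t=k,\ E^{(i)}_k(t),\ \widetilde E^{(i)}_k(t)\}\right]\le\sum_{i=1}^N\mathbb E\left[\sum_{t=1}^T\left(\frac1{G^{(i)}_{1,t}}-1\right)\mathbf 1\{A^{(i)}_t=1\}\right]. \]
   Context: $N$ agents on a connected undirected graph; $W\in\mathbb R^{N\times N}$ doubly stochastic with nonnegative entries, $W_{ij}>0$ for $i\ne j$ iff $\{i,j\}$ is an edge. $K$ arms with Bernoulli rewards of means $\mu_1>\mu_2\ge\cdots\ge\mu_K$, independent across agents, rounds, arms. Decentralized Thompson Sampling with learning rate $\eta$ and prior $\mathrm{Beta}(1,1)$: agent $i$ maintains $\alpha^{(i)}_k(t),\beta^{(i)}_k(t)$ with $\alpha^{(i)}_k(1)=\beta^{(i)}_k(1)=1$; its posterior for arm $k$ at round $t$ is $Q^{(i)}_{k,t}=\mathrm{Beta}(\alpha^{(i)}_k(t),\beta^{(i)}_k(t))$. In round $t$, agent $i$ draws $\theta^{(i)}_k(t)\sim Q^{(i)}_{k,t}$ independently over $k$, plays $A^{(i)}_t\in\arg\max_k\theta^{(i)}_k(t)$, observes reward $Y^{(i)}_t$, sets $\tilde\alpha^{(i)}_k=\alpha^{(i)}_k(t)+\eta Y^{(i)}_t\mathbf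 1\{A^{(i)}_t=k\}$, $\tilde\beta^{(i)}_k=\beta^{(i)}_k(t)+\eta(1-Y^{(i)}_t)\mathbf 1\{A^{(i)}_t=k\}$, and then $\alpha^{(i)}_k(t+1)=\sum_j W_{ij}\tilde\alpha^{(j)}_k$, $\beta^{(i)}_k(t+1)=\sum_j W_{ij}\tilde\beta^{(j)}_k$. Notation: $\hat\mu^{(i)}_k(t)=\frac{\alpha^{(i)}_k(t)-1}{\alpha^{(i)}_k(t)+\beta^{(i)}_k(t)-2}$, $E^{(i)}_k(t)=\{\hat\mu^{(i)}_k(t)\le x_k\}$, $\widetilde E^{(i)}_k(t)=\{\theta^{(i)}_k(t)\le y_k\}$. $G^{(i)}_{1,t}=Q^{(i)}_{1,t}\big((y_k,1]\big)$, i.e. the probability that a $\mathrm{Beta}(\alpha^{(i)}_1(t),\beta^{(i)}_1(t))$ random variable exceeds $y_k$. *)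

theory Defs
  imports "HOL-Probability.Probability"
begin

text \<open>State of all agents: (alpha, beta), indexed by agent i and arm k.\<close>
type_synonym dts_state = "(nat \<Rightarrow> nat \<Rightarrow> real) \<times> (nat \<Rightarrow> nat \<Rightarrow> real)"

definition beta_density :: "real \<Rightarrow> real \<Rightarrow> real \<Rightarrow> real" where
  "beta_density a b u =
     (if 0 < u \<and> u < 1 then u powr (a - 1) * (1 - u) powr (b - 1) / (Beta a b :: real) else 0)"

definition beta_measure :: "real \<Rightarrow> real \<Rightarrow> real measure" where
  "beta_measure a b = density lborel (\<lambda>u. ennreal (beta_density a b u))"

definition sample_theta :: "nat \<Rightarrow> nat \<Rightarrow> dts_state \<Rightarrow> (nat \<times> nat \<Rightarrow> real) measure" where
  "sample_theta N K s =
     PiM ({1..N} \<times> {1..K}) (\<lambda>(i, a). beta_measure (fst s i a) (snd s i a))"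

text \<open>Arm played by agent i: an argmax of the samples (ties, a null event, broken
  towards the smallest index).\<close>
definition chosen_arm :: "nat \<Rightarrow> (nat \<times> nat \<Rightarrow> real) \<Rightarrow> nat \<Rightarrow> nat" where
  "chosen_arm K \<theta> i = (LEAST a. a \<in> {1..K} \<and> (\<forall>b\<in>{1..K}. \<theta> (i, b) \<le> \<theta> (i, a)))"

definition sample_rewards :: "nat \<Rightarrow> (nat \<Rightarrow> real) \<Rightarrow> (nat \<Rightarrow> nat) \<Rightarrow> (nat \<Rightarrow> bool) measure" where
  "sample_rewards N \<mu> A = PiM {1..N} (\<lambda>i. measure_pmf (bernoulli_pmf (\<mu> (A i))))"

definition dts_update ::
  "nat \<Rightarrow> (nat \<Rightarrow> nat \<Rightarrow> real) \<Rightarrow> real \<Rightarrow> dts_state \<Rightarrow> (nat \<Rightarrow> nat) \<Rightarrow> (nat \<Rightarrow> bool) \<Rightarrow> dts_state" where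
  "dts_update N W \<eta> s A Y =
     ((\<lambda>i a. \<Sum>j\<in>{1..N}. W i j * (fst s j a + \<eta> * (if A j = a \<and> Y j then 1 else 0))),
      (\<lambda>i a. \<Sum>j\<in>{1..N}. W i j * (snd s j a + \<eta> * (if A j = a \<and> \<not> Y j then 1 else 0))))"

text \<open>dts_cum N K W mu eta g T s = E[ sum_{t=1}^T g(S_t, theta(t), A_t) ] for the
  Markov chain of the algorithm started in state S_1 = s (expectation of an additive
  functional, defined by backward recursion / tower property; nonnegative integrals).\<close>
fun dts_cum ::
  "nat \<Rightarrow> nat \<Rightarrow> (nat \<Rightarrow> nat \<Rightarrow> real) \<Rightarrow> (nat \<Rightarrow> real) \<Rightarrow> real \<Rightarrow>
   (dts_state \<Rightarrow> (nat \<times> nat \<Rightarrow> real) \<Rightarrow> (nat \<Rightarrow> nat) \<Rightarrow> ennreal) \<Rightarrow> nat \<Rightarrow> dts_state \<Rightarrow> ennreal" where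
  "dts_cum N K W \<mu> \<eta> g 0 s = 0"
| "dts_cum N K W \<mu> \<eta> g (Suc T) s =
     (\<integral>\<^sup>+ \<theta>. (\<integral>\<^sup>+ Y. (g s \<theta> (chosen_arm K \<theta>)
          + dts_cum N K W \<mu> \<eta> g T (dts_update N W \<eta> s (chosen_arm K \<theta>) Y))
        \<partial>sample_rewards N \<mu> (chosen_arm K \<theta>)) \<partial>sample_theta N K s)"

definition dts_init :: dts_state where
  "dts_init = ((\<lambda>i a. 1), (\<lambda>i a. 1))"

definition mu_hat :: "dts_state \<Rightarrow> nat \<Rightarrow> nat \<Rightarrow> real" where
  "mu_hat s i a = (fst s i a - 1) / (fst s i a + snd s i a - 2)"

definition G1 :: "dts_state \<Rightarrow> nat \<Rightarrow> real \<Rightarrow> real" where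
  "G1 s i y = measure (beta_measure (fst s i 1) (snd s i 1)) {y<..1}"

definition lhs_term :: "nat \<Rightarrow> nat \<Rightarrow> real \<Rightarrow> real \<Rightarrow>
    dts_state \<Rightarrow> (nat \<times> nat \<Rightarrow> real) \<Rightarrow> (nat \<Rightarrow> nat) \<Rightarrow> ennreal" where
  "lhs_term i k x y s \<theta> A =
     (if A i = k \<and> mu_hat s i k \<le> x \<and> \<theta> (i, k) \<le> y then 1 else 0)"

definition rhs_term :: "nat \<Rightarrow> real \<Rightarrow>
    dts_state \<Rightarrow> (nat \<times> nat \<Rightarrow> real) \<Rightarrow> (nat \<Rightarrow> nat) \<Rightarrow> ennreal" where
  "rhs_term i y s \<theta> A = (if A i = 1 then ennreal (1 / G1 s i y - 1) else 0)"

end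

theory Submission
  imports Defs
begin

text \<open>
  Fix an agent i and a round, and condition on the current state. Let G be the posterior
  probability that the sample of arm 1 exceeds y, and Q the probability that all other samples
  of agent i are at most y. If agent i plays arm k with a sample at most y, then all of its
  samples are at most y, an event of probability at most (1 - G) Q; on the event where the sample
  of arm 1 lies in (y, 1] and all others are at most y, of probability G Q, agent i plays arm 1.
  So the expected left-hand increment is at most (1/G - 1) times the probability of playing arm 1,
  and the tower property sums this over the rounds. Gossip with a nonnegative row-stochastic W
  keeps all Beta parameters at least 1, which makes G positive.
\<close>

lemma convex_combination_ge:
  fixes w v :: "'a \<Rightarrow> real"
  assumes "(\<Sum>j\<in>J. w j) = 1" "\<And>j. j \<in> J \<Longrightarrow> 0 \<le> w j" "\<And>j. j \<in> J \<Longrightarrow> c \<le> v j"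
  shows "c \<le> (\<Sum>j\<in>J. w j * v j)"
proof -
  have "c = (\<Sum>j\<in>J. w j * c)" using assms(1) by (simp flip: sum_distrib_right)
  also have "\<dots> \<le> (\<Sum>j\<in>J. w j * v j)" using assms(2,3) by (intro sum_mono mult_left_mono)
  finally show ?thesis .
qed

lemma emeasure_le_odds_mult_emeasure:
  assumes "prob_space M"
    and A: "A \<in> sets M" and B: "B \<in> sets M" and disjoint: "A \<inter> B = {}"
    and "0 < measure M B"
  shows "emeasure M A \<le> ennreal (1 / measure M B - 1) * emeasure M B"
proof -
  interpret prob_space M by fact
  have "prob A + prob B \<le> 1"
    using finite_measure_Union[OF A B disjoint] prob_le_1[of "A \<union> B"] by simp
  moreover have "(1 / prob B - 1) * prob B = 1 - prob B"
    using \<open>0 < prob B\<close> by (simp add: field_simps)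
  ultimately have "prob A \<le> (1 / prob B - 1) * prob B"
    by linarith
  moreover have "0 \<le> 1 / prob B - 1"
    using \<open>0 < prob B\<close> prob_le_1[of B] by (simp add: field_simps)
  ultimately show ?thesis
    by (simp add: emeasure_eq_measure ennreal_mult'[symmetric] ennreal_leI)
qed

lemma emeasure_PiM_PiE_remove:
  assumes "product_sigma_finite M" "finite I" "z \<in> I" "\<And>j. j \<in> I \<Longrightarrow> E j \<in> sets (M j)"
  shows "emeasure (PiM I M) (PiE I E) = emeasure (M z) (E z) * (\<Prod>j\<in>I - {z}. emeasure (M j) (E j))"
  using assms by (simp add: product_sigma_finite.emeasure_PiM prod.remove)

lemma measurable_PiM_pmf_countable:
  fixes f :: "('i \<Rightarrow> 'a::countable) \<Rightarrow> 'b::topological_space"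
  assumes "finite I"
  shows "f \<in> borel_measurable (PiM I (\<lambda>i. measure_pmf (p i)))"
proof (rule measurableI)
  fix B :: "'b set"
  let ?M = "PiM I (\<lambda>i. measure_pmf (p i))"
  have countable_space: "countable (space ?M)"
    unfolding space_PiM using assms by (intro countable_PiE) auto
  have singleton: "{Y} \<in> sets ?M" if "Y \<in> space ?M" for Y
  proof -
    have "{Y} = PiE I (\<lambda>j. {Y j})"
      using that by (subst PiE_singleton) (auto simp: space_PiM PiE_iff)
    also have "\<dots> \<in> sets ?M" using assms by (intro sets_PiM_I_finite) auto
    finally show ?thesis .
  qed
  have "f -` B \<inter> space ?M = (\<Union>Y\<in>f -` B \<inter> space ?M. {Y})" by auto
  also have "\<dots> \<in> sets ?M"
    using countable_space singleton by (intro sets.countable_UN') (auto intro: countable_subset)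
  finally show "f -` B \<inter> space ?M \<in> sets ?M" .
qed auto

lemma Beta_real_pos: "0 < a \<Longrightarrow> 0 < b \<Longrightarrow> (0::real) < Beta a b"
  by (simp add: Beta_def Gamma_real_pos)

lemma sets_beta_measure [simp, measurable_cong]: "sets (beta_measure a b) = sets borel"
  by (simp add: beta_measure_def)

lemma borel_measurable_beta_density [measurable]: "beta_density a b \<in> borel_measurable borel"
  unfolding beta_density_def by measurable

lemma sigma_finite_beta_measure: "sigma_finite_measure (beta_measure a b)"
  unfolding beta_measure_def beta_density_def
  by (subst sigma_finite_measure.sigma_finite_iff_density_finite[OF sigma_finite_lborel]) auto

lemma prob_space_beta_measure:
  assumes "0 < a" "0 < b"
  shows "prob_space (beta_measure a b)"
proof
  have "((\<lambda>t. t powr (a - 1) * (1 - t) powr (b - 1)) has_integral Beta a b) {0<..<1}"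
    using has_integral_Beta_real[OF assms] by (simp add: has_integral_Icc_iff_Ioo)
  then have "((\<lambda>t. t powr (a - 1) * (1 - t) powr (b - 1) / Beta a b) has_integral 1) {0<..<1}"
    using has_integral_divide[of _ "Beta a b" _ "Beta a b"] Beta_real_pos[OF assms] by simp
  then have "(\<integral>\<^sup>+t. ennreal (indicator {0<..<1} t * (t powr (a - 1) * (1 - t) powr (b - 1) / Beta a b))
      \<partial>lborel) = ennreal 1"
    by (rule nn_integral_has_integral_lebesgue[rotated]) (use Beta_real_pos[OF assms] in simp)
  moreover have "beta_density a b t
      = indicator {0<..<1} t * (t powr (a - 1) * (1 - t) powr (b - 1) / Beta a b)" for t
    by (simp add: beta_density_def indicator_def)
  ultimately show "emeasure (beta_measure a b) (space (beta_measure a b)) = 1"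
    by (simp add: beta_measure_def emeasure_density)
qed

lemma measure_beta_measure_greaterThanAtMost_pos:
  assumes "0 < a" "0 < b" "y < 1"
  shows "0 < measure (beta_measure a b) {y<..1}"
proof -
  interpret prob_space "beta_measure a b" by (rule prob_space_beta_measure[OF assms(1,2)])
  have integrand_nonzero: "indicator {y<..1} t * ennreal (beta_density a b t) \<noteq> 0"
    if "t \<in> {max y 0<..<1}" for t
    using that Beta_real_pos[OF assms(1,2)] by (auto simp: beta_density_def indicator_def)
  have emeasure_eq: "emeasure (beta_measure a b) {y<..1}
      = (\<integral>\<^sup>+t. indicator {y<..1} t * ennreal (beta_density a b t) \<partial>lborel)"
    by (simp add: beta_measure_def emeasure_density nn_integral_density mult.commute)
  have "emeasure (beta_measure a b) {y<..1} \<noteq> 0"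
  proof
    assume "emeasure (beta_measure a b) {y<..1} = 0"
    with emeasure_eq have "AE t in lborel. indicator {y<..1} t * ennreal (beta_density a b t) = 0"
      by (subst nn_integral_0_iff_AE[symmetric]) auto
    then have "AE t in lborel. t \<notin> {max y 0<..<1}"
      using integrand_nonzero by (auto elim!: AE_mp)
    then have "emeasure lborel {max y 0<..<1} = 0"
      by (subst (asm) AE_iff_measurable[where N="{max y 0<..<1}"]) auto
    then show False using assms by simp
  qed
  then show ?thesis by (simp add: emeasure_eq_measure zero_less_measure_iff)
qed

lemma chosen_arm_is_argmax:
  assumes "1 \<le> K"
  shows "chosen_arm K \<theta> i \<in> {1..K} \<and> (\<forall>b\<in>{1..K}. \<theta> (i, b) \<le> \<theta> (i, chosen_arm K \<theta> i))"
proof -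
  have "Max ((\<lambda>b. \<theta> (i, b)) ` {1..K}) \<in> (\<lambda>b. \<theta> (i, b)) ` {1..K}"
    using assms by (intro Max_in) auto
  then obtain a where "a \<in> {1..K}" "\<theta> (i, a) = Max ((\<lambda>b. \<theta> (i, b)) ` {1..K})"
    by auto
  then have "\<exists>a. a \<in> {1..K} \<and> (\<forall>b\<in>{1..K}. \<theta> (i, b) \<le> \<theta> (i, a))"
    by auto
  then show ?thesis unfolding chosen_arm_def by (rule LeastI_ex)
qed

lemma chosen_arm_eq_1:
  assumes "1 \<le> K" "\<And>b. b \<in> {1..K} \<Longrightarrow> \<theta> (i, b) \<le> \<theta> (i, 1)"
  shows "chosen_arm K \<theta> i = 1"
  unfolding chosen_arm_def using assms by (intro Least_equality) auto

lemma measurable_sample_theta_component [measurable]: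
  "(\<lambda>\<theta>. \<theta> (i, a)) \<in> borel_measurable (sample_theta N K s)"
proof (cases "(i, a) \<in> {1..N} \<times> {1..K}")
  case True
  then have "(\<lambda>\<theta>. \<theta> (i, a)) \<in> measurable (sample_theta N K s) (beta_measure (fst s i a) (snd s i a))"
    unfolding sample_theta_def
    using measurable_component_singleton[of "(i, a)" "{1..N} \<times> {1..K}"
        "\<lambda>(i, a). beta_measure (fst s i a) (snd s i a)"]
    by simp
  then show ?thesis
    by (simp only: measurable_cong_sets[OF refl sets_beta_measure])
next
  case False
  then have "\<theta> (i, a) = undefined" if "\<theta> \<in> space (sample_theta N K s)" for \<theta>
    using that by (auto simp: sample_theta_def space_PiM PiE_def extensional_def)
  then show ?thesis
    by (subst measurable_cong[where g="\<lambda>_. undefined"]) auto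
qed

lemma measurable_chosen_arm [measurable]:
  "(\<lambda>\<theta>. chosen_arm K \<theta> i) \<in> measurable (sample_theta N K s) (count_space UNIV)"
proof -
  have [measurable]: "Measurable.pred (sample_theta N K s) (\<lambda>\<theta>. \<theta> (i, b) \<le> \<theta> (i, a))" for a b
    unfolding pred_def by measurable
  show ?thesis
    unfolding chosen_arm_def by measurable
qed

lemma measurable_lhs_term:
  "(\<lambda>\<theta>. lhs_term i k x y s \<theta> (chosen_arm K \<theta>)) \<in> borel_measurable (sample_theta N K s)"
  unfolding lhs_term_def by measurable

lemma measurable_rhs_term:
  "(\<lambda>\<theta>. rhs_term i y s \<theta> (chosen_arm K \<theta>)) \<in> borel_measurable (sample_theta N K s)"
  unfolding rhs_term_def by measurable

lemma measurable_comp_chosen_arm: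
  assumes "\<And>A A'. (\<forall>j\<in>{1..N}. A j = A' j) \<Longrightarrow> c A = c A'"
  shows "(\<lambda>\<theta>. c (chosen_arm K \<theta>)) \<in> borel_measurable (sample_theta N K s)"
proof -
  let ?M = "sample_theta N K s"
  let ?F = "PiE {1..N} (\<lambda>_. UNIV :: nat set)"
  let ?A = "\<lambda>\<theta>. restrict (chosen_arm K \<theta>) {1..N}"
  have "countable ?F" by (intro countable_PiE) auto
  then have "?A \<in> measurable ?M (count_space ?F)"
  proof (rule measurable_count_space_eq_countable[THEN iffD2], intro conjI ballI)
    show "?A \<in> space ?M \<rightarrow> ?F" by auto
    fix f assume "f \<in> ?F"
    then have "?A -` {f} \<inter> space ?M = {\<theta> \<in> space ?M. \<forall>j\<in>{1..N}. chosen_arm K \<theta> j = f j}"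
      by (auto simp: fun_eq_iff PiE_iff extensional_def)
    also have "\<dots> \<in> sets ?M" by measurable
    finally show "?A -` {f} \<inter> space ?M \<in> sets ?M" .
  qed
  then have "(\<lambda>\<theta>. c (?A \<theta>)) \<in> borel_measurable ?M" by (rule measurable_compose) simp
  moreover have "c (?A \<theta>) = c (chosen_arm K \<theta>)" for \<theta> by (rule assms) simp
  ultimately show ?thesis by simp
qed

lemma measurable_sample_rewards [measurable]:
  "f \<in> borel_measurable (sample_rewards N \<mu> A)"
  unfolding sample_rewards_def by (rule measurable_PiM_pmf_countable) simp

lemma prob_space_sample_rewards: "prob_space (sample_rewards N \<mu> A)"
  unfolding sample_rewards_def by (intro prob_space_PiM prob_space_measure_pmf)

lemma sample_rewards_cong:
  "(\<forall>j\<in>{1..N}. A j = A' j) \<Longrightarrow> sample_rewards N \<mu> A = sample_rewards N \<mu> A'"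
  unfolding sample_rewards_def by (auto intro!: PiM_cong)

lemma dts_update_cong:
  "(\<forall>j\<in>{1..N}. A j = A' j) \<Longrightarrow> dts_update N W \<eta> s A = dts_update N W \<eta> s A'"
  unfolding dts_update_def by (auto intro!: sum.cong ext)

lemma nn_integral_round_add:
  fixes g :: "(nat \<times> nat \<Rightarrow> real) \<Rightarrow> ennreal" and h :: "dts_state \<Rightarrow> ennreal"
  assumes g: "g \<in> borel_measurable (sample_theta N K s)"
  shows "(\<integral>\<^sup>+\<theta>. (\<integral>\<^sup>+Y. g \<theta> + h (dts_update N W \<eta> s (chosen_arm K \<theta>) Y)
            \<partial>sample_rewards N \<mu> (chosen_arm K \<theta>)) \<partial>sample_theta N K s)
       = (\<integral>\<^sup>+\<theta>. g \<theta> \<partial>sample_theta N K s)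
         + (\<integral>\<^sup>+\<theta>. (\<integral>\<^sup>+Y. h (dts_update N W \<eta> s (chosen_arm K \<theta>) Y)
            \<partial>sample_rewards N \<mu> (chosen_arm K \<theta>)) \<partial>sample_theta N K s)"
proof -
  have add_const: "(\<integral>\<^sup>+Y. c + h (dts_update N W \<eta> s A Y) \<partial>sample_rewards N \<mu> A)
      = c + (\<integral>\<^sup>+Y. h (dts_update N W \<eta> s A Y) \<partial>sample_rewards N \<mu> A)" for c A
  proof -
    interpret prob_space "sample_rewards N \<mu> A" by (rule prob_space_sample_rewards)
    show ?thesis by (subst nn_integral_add) (auto simp: emeasure_space_1)
  qed
  have "(\<lambda>\<theta>. \<integral>\<^sup>+Y. h (dts_update N W \<eta> s (chosen_arm K \<theta>) Y) \<partial>sample_rewards N \<mu> (chosen_arm K \<theta>))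
      \<in> borel_measurable (sample_theta N K s)"
    by (rule measurable_comp_chosen_arm) (metis dts_update_cong sample_rewards_cong)
  then show ?thesis
    unfolding add_const by (rule nn_integral_add[OF g])
qed

definition beta_params_ge_1 :: "nat \<Rightarrow> dts_state \<Rightarrow> bool" where
  "beta_params_ge_1 N s \<longleftrightarrow> (\<forall>i\<in>{1..N}. \<forall>a. 1 \<le> fst s i a \<and> 1 \<le> snd s i a)"

lemma beta_params_ge_1_dts_update:
  assumes "beta_params_ge_1 N s"
    and "\<And>i j. i \<in> {1..N} \<Longrightarrow> j \<in> {1..N} \<Longrightarrow> W i j \<ge> 0"
    and "\<And>i. i \<in> {1..N} \<Longrightarrow> (\<Sum>j\<in>{1..N}. W i j) = 1"
    and "0 \<le> \<eta>"
  shows "beta_params_ge_1 N (dts_update N W \<eta> s A Y)"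
  unfolding beta_params_ge_1_def
proof (intro ballI allI conjI)
  fix i a assume i: "i \<in> {1..N}"
  have params: "1 \<le> fst s j a" "1 \<le> snd s j a" if "j \<in> {1..N}" for j
    using assms(1) that by (auto simp: beta_params_ge_1_def)
  show "1 \<le> fst (dts_update N W \<eta> s A Y) i a" "1 \<le> snd (dts_update N W \<eta> s A Y) i a"
    unfolding dts_update_def fst_conv snd_conv
    using assms(2)[OF i] assms(3)[OF i] assms(4) params
    by (auto intro!: convex_combination_ge add_increasing2)
qed

lemma dts_cum_mono:
  fixes g h :: "dts_state \<Rightarrow> (nat \<times> nat \<Rightarrow> real) \<Rightarrow> (nat \<Rightarrow> nat) \<Rightarrow> ennreal"
  assumes W_nonneg: "\<And>i j. i \<in> {1..N} \<Longrightarrow> j \<in> {1..N} \<Longrightarrow> W i j \<ge> 0"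
    and W_rows: "\<And>i. i \<in> {1..N} \<Longrightarrow> (\<Sum>j\<in>{1..N}. W i j) = 1"
    and \<eta>: "0 \<le> \<eta>"
    and g: "\<And>s. (\<lambda>\<theta>. g s \<theta> (chosen_arm K \<theta>)) \<in> borel_measurable (sample_theta N K s)"
    and h: "\<And>s. (\<lambda>\<theta>. h s \<theta> (chosen_arm K \<theta>)) \<in> borel_measurable (sample_theta N K s)"
    and round: "\<And>s. beta_params_ge_1 N s \<Longrightarrow>
      (\<integral>\<^sup>+\<theta>. g s \<theta> (chosen_arm K \<theta>) \<partial>sample_theta N K s)
      \<le> (\<integral>\<^sup>+\<theta>. h s \<theta> (chosen_arm K \<theta>) \<partial>sample_theta N K s)"
  shows "beta_params_ge_1 N s \<Longrightarrow> dts_cum N K W \<mu> \<eta> g T s \<le> dts_cum N K W \<mu> \<eta> h T s"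
proof (induction T arbitrary: s)
  case (Suc T)
  let ?\<Theta> = "sample_theta N K s"
  let ?R = "\<lambda>\<theta>. sample_rewards N \<mu> (chosen_arm K \<theta>)"
  let ?U = "\<lambda>\<theta> Y. dts_update N W \<eta> s (chosen_arm K \<theta>) Y"
  let ?cum_g = "dts_cum N K W \<mu> \<eta> g T" and ?cum_h = "dts_cum N K W \<mu> \<eta> h T"
  have "dts_cum N K W \<mu> \<eta> g (Suc T) s
      = (\<integral>\<^sup>+\<theta>. (\<integral>\<^sup>+Y. g s \<theta> (chosen_arm K \<theta>) + ?cum_g (?U \<theta> Y) \<partial>?R \<theta>) \<partial>?\<Theta>)"
    by simp
  also have "\<dots> \<le> (\<integral>\<^sup>+\<theta>. (\<integral>\<^sup>+Y. g s \<theta> (chosen_arm K \<theta>) + ?cum_h (?U \<theta> Y) \<partial>?R \<theta>) \<partial>?\<Theta>)"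
    using Suc.prems W_nonneg W_rows \<eta>
    by (intro nn_integral_mono add_left_mono Suc.IH beta_params_ge_1_dts_update)
  also have "\<dots> = (\<integral>\<^sup>+\<theta>. g s \<theta> (chosen_arm K \<theta>) \<partial>?\<Theta>) + (\<integral>\<^sup>+\<theta>. (\<integral>\<^sup>+Y. ?cum_h (?U \<theta> Y) \<partial>?R \<theta>) \<partial>?\<Theta>)"
    by (rule nn_integral_round_add[OF g])
  also have "\<dots> \<le> (\<integral>\<^sup>+\<theta>. h s \<theta> (chosen_arm K \<theta>) \<partial>?\<Theta>) + (\<integral>\<^sup>+\<theta>. (\<integral>\<^sup>+Y. ?cum_h (?U \<theta> Y) \<partial>?R \<theta>) \<partial>?\<Theta>)"
    by (intro add_right_mono round Suc.prems)
  also have "\<dots> = (\<integral>\<^sup>+\<theta>. (\<integral>\<^sup>+Y. h s \<theta> (chosen_arm K \<theta>) + ?cum_h (?U \<theta> Y) \<partial>?R \<theta>) \<partial>?\<Theta>)"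
    by (rule nn_integral_round_add[OF h, symmetric])
  also have "\<dots> = dts_cum N K W \<mu> \<eta> h (Suc T) s"
    by simp
  finally show ?case .
qed simp

definition all_samples_le :: "nat \<Rightarrow> nat \<Rightarrow> nat \<Rightarrow> real \<Rightarrow> (nat \<times> nat \<Rightarrow> real) set" where
  "all_samples_le N K i y = PiE ({1..N} \<times> {1..K}) (\<lambda>j. if fst j = i then {..y} else UNIV)"

text \<open>The sample of arm 1 is confined to \<open>(y, 1]\<close> so that its probability is exactly \<open>G1\<close>.\<close>
definition only_arm1_sample_gt :: "nat \<Rightarrow> nat \<Rightarrow> nat \<Rightarrow> real \<Rightarrow> (nat \<times> nat \<Rightarrow> real) set" where
  "only_arm1_sample_gt N K i y =
     PiE ({1..N} \<times> {1..K}) ((\<lambda>j. if fst j = i then {..y} else UNIV)((i, 1) := {y<..1}))"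

lemma sets_all_samples_le: "all_samples_le N K i y \<in> sets (sample_theta N K s)"
  unfolding all_samples_le_def sample_theta_def by (intro sets_PiM_I_finite) auto

lemma sets_only_arm1_sample_gt: "only_arm1_sample_gt N K i y \<in> sets (sample_theta N K s)"
  unfolding only_arm1_sample_gt_def sample_theta_def by (intro sets_PiM_I_finite) auto

lemma emeasure_all_samples_le:
  assumes s: "beta_params_ge_1 N s" and i: "i \<in> {1..N}" and K: "1 \<le> K" and y: "y < 1"
  shows "emeasure (sample_theta N K s) (all_samples_le N K i y)
       \<le> ennreal (1 / G1 s i y - 1) * emeasure (sample_theta N K s) (only_arm1_sample_gt N K i y)"
proof -
  define I where "I = {1..N} \<times> {1..K}"
  define M where "M = (\<lambda>(i, a). beta_measure (fst s i a) (snd s i a))"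
  have M: "product_sigma_finite M"
    by (simp add: product_sigma_finite_def M_def split_beta sigma_finite_beta_measure)
  have I: "finite I" "(i, 1) \<in> I" using i K by (auto simp: I_def)
  have \<Theta>: "sample_theta N K s = PiM I M" by (simp add: sample_theta_def I_def M_def)
  have params: "1 \<le> fst s i 1" "1 \<le> snd s i 1"
    using s i by (auto simp: beta_params_ge_1_def)
  define P where "P = M (i, 1)"
  have P: "prob_space P"
    using params by (simp add: P_def M_def prob_space_beta_measure)
  have G: "G1 s i y = measure P {y<..1}" by (simp add: G1_def P_def M_def)
  have "0 < G1 s i y"
    using params y by (simp add: G1_def measure_beta_measure_greaterThanAtMost_pos)
  then have P_le: "emeasure P {..y} \<le> ennreal (1 / G1 s i y - 1) * emeasure P {y<..1}"
    unfolding G by (intro emeasure_le_odds_mult_emeasure[OF P]) (auto simp: P_def M_def)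
  define below where "below = (\<lambda>j::nat \<times> nat. if fst j = i then {..y} else UNIV :: real set)"
  define above where "above = below((i, 1) := {y<..1})"
  have events: "all_samples_le N K i y = PiE I below" "only_arm1_sample_gt N K i y = PiE I above"
    by (simp_all add: all_samples_le_def only_arm1_sample_gt_def I_def below_def above_def)
  have sets_below: "below j \<in> sets (M j)" "above j \<in> sets (M j)" for j
    by (simp_all add: below_def above_def M_def split_beta)
  define Q where "Q = (\<Prod>j\<in>I - {(i, 1)}. emeasure (M j) (below j))"
  have "(\<Prod>j\<in>I - {(i, 1)}. emeasure (M j) (above j)) = Q"
    unfolding Q_def above_def by (intro prod.cong) auto
  moreover have "above (i, 1) = {y<..1}" by (simp add: above_def)
  ultimately have above: "emeasure (PiM I M) (PiE I above) = emeasure P {y<..1} * Q"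
    using emeasure_PiM_PiE_remove[OF M I sets_below(2)] by (simp add: P_def)
  have "emeasure (PiM I M) (PiE I below) = emeasure P {..y} * Q"
    using emeasure_PiM_PiE_remove[OF M I sets_below(1)] by (simp add: below_def P_def Q_def)
  also have "\<dots> \<le> ennreal (1 / G1 s i y - 1) * emeasure (PiM I M) (PiE I above)"
    using mult_right_mono[OF P_le zero_le, of Q] by (simp add: above mult.assoc)
  finally show ?thesis by (simp add: \<Theta> events)
qed

lemma lhs_term_le_indicator_all_samples_le:
  assumes "1 \<le> K" and "\<theta> \<in> space (sample_theta N K s)"
  shows "lhs_term i k x y s \<theta> (chosen_arm K \<theta>) \<le> indicator (all_samples_le N K i y) \<theta>"
proof (cases "chosen_arm K \<theta> i = k \<and> \<theta> (i, k) \<le> y")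
  case True
  then have "\<theta> (i, b) \<le> y" if "b \<in> {1..K}" for b
    using chosen_arm_is_argmax[OF assms(1), of \<theta> i] that by (auto intro: order.trans)
  then have "\<theta> \<in> all_samples_le N K i y"
    using assms(2) by (auto simp: all_samples_le_def sample_theta_def space_PiM PiE_iff)
  then show ?thesis by (simp add: lhs_term_def)
qed (auto simp: lhs_term_def)

lemma chosen_arm_eq_1_if_only_arm1_sample_gt:
  assumes "1 \<le> K" and "i \<in> {1..N}" and "\<theta> \<in> only_arm1_sample_gt N K i y"
  shows "chosen_arm K \<theta> i = 1"
proof (rule chosen_arm_eq_1[OF assms(1)])
  fix b assume b: "b \<in> {1..K}"
  have mem: "\<theta> j \<in> ((\<lambda>j. if fst j = i then {..y} else UNIV)((i, 1) := {y<..1})) j"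
    if "j \<in> {1..N} \<times> {1..K}" for j
    using assms(3) that unfolding only_arm1_sample_gt_def by (rule PiE_mem)
  show "\<theta> (i, b) \<le> \<theta> (i, 1)"
    using mem[of "(i, b)"] mem[of "(i, 1)"] assms(1,2) b by (cases "b = 1") auto
qed

lemma nn_integral_lhs_term_le_rhs_term:
  assumes s: "beta_params_ge_1 N s" and i: "i \<in> {1..N}" and k: "k \<in> {2..K}" and y: "y < 1"
  shows "(\<integral>\<^sup>+\<theta>. lhs_term i k x y s \<theta> (chosen_arm K \<theta>) \<partial>sample_theta N K s)
       \<le> (\<integral>\<^sup>+\<theta>. rhs_term i y s \<theta> (chosen_arm K \<theta>) \<partial>sample_theta N K s)"
proof -
  have K: "1 \<le> K" using k by simp
  have "(\<integral>\<^sup>+\<theta>. lhs_term i k x y s \<theta> (chosen_arm K \<theta>) \<partial>sample_theta N K s)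
      \<le> emeasure (sample_theta N K s) (all_samples_le N K i y)"
    using lhs_term_le_indicator_all_samples_le[OF K]
    by (subst nn_integral_indicator[OF sets_all_samples_le, symmetric]) (rule nn_integral_mono)
  also have "\<dots> \<le> (\<integral>\<^sup>+\<theta>. ennreal (1 / G1 s i y - 1) * indicator (only_arm1_sample_gt N K i y) \<theta>
      \<partial>sample_theta N K s)"
    using emeasure_all_samples_le[OF s i K y]
    by (simp add: nn_integral_cmult_indicator sets_only_arm1_sample_gt)
  also have "\<dots> \<le> (\<integral>\<^sup>+\<theta>. rhs_term i y s \<theta> (chosen_arm K \<theta>) \<partial>sample_theta N K s)"
    using chosen_arm_eq_1_if_only_arm1_sample_gt[OF K i]
    by (intro nn_integral_mono) (simp add: rhs_term_def split: split_indicator)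
  finally show ?thesis .
qed

theorem lemma5:
  fixes N K k T :: nat
    and W :: "nat \<Rightarrow> nat \<Rightarrow> real"
    and E :: "nat \<Rightarrow> nat \<Rightarrow> bool"
    and \<mu> :: "nat \<Rightarrow> real"
    and \<eta> x y :: real
  assumes N_pos: "N \<ge> 1"
    and E_vertices: "\<And>i j. E i j \<Longrightarrow> i \<in> {1..N} \<and> j \<in> {1..N}"
    and E_sym: "\<And>i j. E i j \<Longrightarrow> E j i"
    and E_irrefl: "\<And>i. \<not> E i i"
    and E_connected: "\<And>i j. i \<in> {1..N} \<Longrightarrow> j \<in> {1..N} \<Longrightarrow> E\<^sup>*\<^sup>* i j"
    and W_nonneg: "\<And>i j. i \<in> {1..N} \<Longrightarrow> j \<in> {1..N} \<Longrightarrow> W i j \<ge> 0"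
    and W_rows: "\<And>i. i \<in> {1..N} \<Longrightarrow> (\<Sum>j\<in>{1..N}. W i j) = 1"
    and W_cols: "\<And>j. j \<in> {1..N} \<Longrightarrow> (\<Sum>i\<in>{1..N}. W i j) = 1"
    and W_graph: "\<And>i j. i \<in> {1..N} \<Longrightarrow> j \<in> {1..N} \<Longrightarrow> i \<noteq> j \<Longrightarrow> (W i j > 0 \<longleftrightarrow> E i j)"
    and \<mu>_range: "\<And>a. a \<in> {1..K} \<Longrightarrow> 0 \<le> \<mu> a \<and> \<mu> a \<le> 1"
    and \<mu>_best: "\<And>a. a \<in> {2..K} \<Longrightarrow> \<mu> a < \<mu> 1"
    and \<mu>_sorted: "\<And>a. a \<in> {2..<K} \<Longrightarrow> \<mu> (Suc a) \<le> \<mu> a"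
    and \<eta>_pos: "\<eta> > 0"
    and k_range: "k \<in> {2..K}"
    and thresholds: "\<mu> k < x" "x < y" "y < \<mu> 1"
    and T_pos: "T \<ge> 1"
  shows "(\<Sum>i\<in>{1..N}. dts_cum N K W \<mu> \<eta> (lhs_term i k x y) T dts_init)
         \<le> (\<Sum>i\<in>{1..N}. dts_cum N K W \<mu> \<eta> (rhs_term i y) T dts_init)"
proof -
  have y: "y < 1" using thresholds(3) \<mu>_range[of 1] k_range by auto
  have init: "beta_params_ge_1 N dts_init" by (simp add: beta_params_ge_1_def dts_init_def)
  have "dts_cum N K W \<mu> \<eta> (lhs_term i k x y) T dts_init \<le> dts_cum N K W \<mu> \<eta> (rhs_term i y) T dts_init"
    if "i \<in> {1..N}" for i
    using W_nonneg W_rows \<eta>_pos init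
    by (intro dts_cum_mono measurable_lhs_term measurable_rhs_term
        nn_integral_lhs_term_le_rhs_term that k_range y) auto
  then show ?thesis by (rule sum_mono)
qed

end
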